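(* Let $G=(V,E)$ be a connected undirected graph with at least one edge and let $\lambda$ be the largest eigenvalue of the matrix $K$ defined below. Then every truthful mechanism $M$ for the Vertex Cover set system of $G$ has frugality ratio $\phi_M\ge\lambda/2$.
   Context: A mechanism for a set system takes bids $b$, selects a feasible winning set $S$ and pays each winner $e$ an amount $p_e\ge b_e$; profit is $p_e-c_e$ for winners and $0$ otherwise; truthful means that for every agent and every fixed bids of the others, bidding one's true cost $c_e$ maximizes profit. $p_M(c)$ is the total payment when bids equal costs $c$; $y(X)=\sum_{e\in X}y_e$. Lower bound $\nu(c)$: with $S$ a feasible set minimizing $c(S)$ (ties broken lexicographically), $\nu(c)$ is the maximum of $x(S)$ subject to $x_e\ge c_e$ for all $e$, $x_e=c_e$ for $e\notin S$, and $x(S)\le x(T)$ for all feasible $T$. Frugality ratio $\phi_M=\sup_c p_M(c)/\nu(c)$. Vertex Cover set system of $G$: agents are the vertices, feasible sets are the vertex covers of $G$. $\nu_v=\nu(\mathbf 1_v)$ where $\mathbf 1_v$ has $1$ at $v$, $0$ elsewhere. $K$ is the $V\times V$ matrix with $K_{uv}=1/\nu_u$ if $u\sim v$ and $0$ otherwise (i.e. $K=\mathrm{diag}(1/\nu_v)A$ with $A$ the adjacency matrix); $\lambda$ is its largest (real) eigenvalue. *)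

theory Defs
  imports "HOL-Analysis.Analysis"
begin

text \<open>Graphs: vertex set = the finite (linearly ordered) type 'v; edges given by a
symmetric irreflexive relation E.\<close>

definition simple_graph :: "('v \<Rightarrow> 'v \<Rightarrow> bool) \<Rightarrow> bool" where
  "simple_graph E \<longleftrightarrow> (\<forall>u v. E u v \<longrightarrow> E v u) \<and> (\<forall>v. \<not> E v v)"

definition connected_graph :: "('v \<Rightarrow> 'v \<Rightarrow> bool) \<Rightarrow> bool" where
  "connected_graph E \<longleftrightarrow> (\<forall>u v. E\<^sup>*\<^sup>* u v)"

definition vertex_cover :: "('v \<Rightarrow> 'v \<Rightarrow> bool) \<Rightarrow> 'v set \<Rightarrow> bool" where
  "vertex_cover E S \<longleftrightarrow> (\<forall>u v. E u v \<longrightarrow> u \<in> S \<or> v \<in> S)"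

definition nonneg :: "('v \<Rightarrow> real) \<Rightarrow> bool" where
  "nonneg c \<longleftrightarrow> (\<forall>e. 0 \<le> c e)"

definition is_mechanism ::
  "('v \<Rightarrow> 'v \<Rightarrow> bool) \<Rightarrow> (('v \<Rightarrow> real) \<Rightarrow> 'v set) \<Rightarrow> (('v \<Rightarrow> real) \<Rightarrow> 'v \<Rightarrow> real) \<Rightarrow> bool" where
  "is_mechanism E W p \<longleftrightarrow>
     (\<forall>b. nonneg b \<longrightarrow> vertex_cover E (W b) \<and> (\<forall>e\<in>W b. b e \<le> p b e))"

definition profit ::
  "(('v \<Rightarrow> real) \<Rightarrow> 'v set) \<Rightarrow> (('v \<Rightarrow> real) \<Rightarrow> 'v \<Rightarrow> real) \<Rightarrow> ('v \<Rightarrow> real) \<Rightarrow> 'v \<Rightarrow> real \<Rightarrow> real" where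
  "profit W p b e ce = (if e \<in> W b then p b e - ce else 0)"

definition truthful ::
  "(('v \<Rightarrow> real) \<Rightarrow> 'v set) \<Rightarrow> (('v \<Rightarrow> real) \<Rightarrow> 'v \<Rightarrow> real) \<Rightarrow> bool" where
  "truthful W p \<longleftrightarrow>
     (\<forall>b e ce x. nonneg b \<longrightarrow> 0 \<le> ce \<longrightarrow> 0 \<le> x \<longrightarrow>
        profit W p (b(e := x)) e ce \<le> profit W p (b(e := ce)) e ce)"

definition total_payment ::
  "(('v \<Rightarrow> real) \<Rightarrow> 'v set) \<Rightarrow> (('v \<Rightarrow> real) \<Rightarrow> 'v \<Rightarrow> real) \<Rightarrow> ('v \<Rightarrow> real) \<Rightarrow> real" where
  "total_payment W p c = (\<Sum>e\<in>W c. p c e)"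

definition min_cover :: "('v::{finite,linorder} \<Rightarrow> 'v \<Rightarrow> bool) \<Rightarrow> ('v \<Rightarrow> real) \<Rightarrow> 'v set" where
  "min_cover E c = (THE S. vertex_cover E S \<and> (\<forall>T. vertex_cover E T \<longrightarrow> sum c S \<le> sum c T) \<and>
      (\<forall>T. vertex_cover E T \<longrightarrow> sum c T = sum c S \<longrightarrow> T \<noteq> S \<longrightarrow>
           lexordp (<) (sorted_list_of_set S) (sorted_list_of_set T)))"

definition nu :: "('v::{finite,linorder} \<Rightarrow> 'v \<Rightarrow> bool) \<Rightarrow> ('v \<Rightarrow> real) \<Rightarrow> real" where
  "nu E c = (let S = min_cover E c in
     Sup {sum x S | x. (\<forall>e. c e \<le> x e) \<and> (\<forall>e. e \<notin> S \<longrightarrow> x e = c e) \<and>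
                        (\<forall>T. vertex_cover E T \<longrightarrow> sum x S \<le> sum x T)})"

definition frugality_ratio ::
  "('v::{finite,linorder} \<Rightarrow> 'v \<Rightarrow> bool) \<Rightarrow> (('v \<Rightarrow> real) \<Rightarrow> 'v set) \<Rightarrow> (('v \<Rightarrow> real) \<Rightarrow> 'v \<Rightarrow> real) \<Rightarrow> ereal" where
  "frugality_ratio E W p = (SUP c\<in>{c. nonneg c \<and> 0 < nu E c}. ereal (total_payment W p c / nu E c))"

definition nu_vertex :: "('v::{finite,linorder} \<Rightarrow> 'v \<Rightarrow> bool) \<Rightarrow> 'v \<Rightarrow> real" where
  "nu_vertex E v = nu E (\<lambda>u. if u = v then 1 else 0)"

definition Kmat :: "('v::{finite,linorder} \<Rightarrow> 'v \<Rightarrow> bool) \<Rightarrow> ((real, 'v) vec, 'v) vec" where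
  "Kmat E = (\<chi> u w. if E u w then 1 / nu_vertex E u else 0)"

definition real_eigenvalue :: "real^'n^'n \<Rightarrow> real \<Rightarrow> bool" where
  "real_eigenvalue A \<mu> \<longleftrightarrow> (\<exists>x. x \<noteq> 0 \<and> A *v x = \<mu> *\<^sub>R x)"

definition largest_eigenvalue :: "real^'n^'n \<Rightarrow> real" where
  "largest_eigenvalue A = Max {\<mu>. real_eigenvalue A \<mu>}"

end

theory Submission
  imports Defs "HOL-Library.List_Lexorder"
begin

(* Let x be an eigenvector of K for its largest eigenvalue lambda, y = |x|, and let r be any
   real upper bound on the frugality ratio, so every total payment is at most r * nu.
   For an edge uw, bidding y on u and w and 0 elsewhere makes u or w win.  If u wins this pair
   bid, truthfulness forces the mechanism to pay u at least y_u at the cost vector y_w * 1_w,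
   whose benchmark is y_w * nu_w; so the winning neighbours of w receive at most r y_w nu_w.
   Double counting the edges against the eigenvalue equation gives
   lambda * sum_u nu_u y_u^2 <= 2 r * sum_u nu_u y_u^2, i.e. lambda <= 2r. *)

lemma eigenvectors_independent:
  fixes A :: "real^'n^'n" and f :: "real \<Rightarrow> real^'n"
  assumes "finite M" "\<forall>\<mu>\<in>M. A *v f \<mu> = \<mu> *\<^sub>R f \<mu>" "\<forall>\<mu>\<in>M. f \<mu> \<noteq> 0"
    and "(\<Sum>\<mu>\<in>M. a \<mu> *\<^sub>R f \<mu>) = 0"
  shows "\<forall>\<mu>\<in>M. a \<mu> = 0"
  using assms
proof (induction M arbitrary: a rule: finite_induct)
  case empty
  then show ?case by simp
next
  case (insert m M)
  have combination: "a m *\<^sub>R f m + (\<Sum>\<mu>\<in>M. a \<mu> *\<^sub>R f \<mu>) = 0"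
    using insert by simp
  then have "A *v (a m *\<^sub>R f m + (\<Sum>\<mu>\<in>M. a \<mu> *\<^sub>R f \<mu>))
      - m *\<^sub>R (a m *\<^sub>R f m + (\<Sum>\<mu>\<in>M. a \<mu> *\<^sub>R f \<mu>)) = 0"
    by simp
  moreover have "A *v (a m *\<^sub>R f m + (\<Sum>\<mu>\<in>M. a \<mu> *\<^sub>R f \<mu>))
      = a m *\<^sub>R (m *\<^sub>R f m) + (\<Sum>\<mu>\<in>M. a \<mu> *\<^sub>R (\<mu> *\<^sub>R f \<mu>))"
    using insert.prems by (simp add: matrix_vector_right_distrib vec.sum matrix_vector_mult_scaleR)
  ultimately have "(\<Sum>\<mu>\<in>M. (a \<mu> * \<mu>) *\<^sub>R f \<mu>) - (\<Sum>\<mu>\<in>M. (m * a \<mu>) *\<^sub>R f \<mu>) = 0"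
    by (simp add: scaleR_right_distrib scaleR_sum_right mult.commute)
  moreover have "(\<Sum>\<mu>\<in>M. (a \<mu> * (\<mu> - m)) *\<^sub>R f \<mu>)
      = (\<Sum>\<mu>\<in>M. (a \<mu> * \<mu>) *\<^sub>R f \<mu>) - (\<Sum>\<mu>\<in>M. (m * a \<mu>) *\<^sub>R f \<mu>)"
    by (simp add: sum_subtractf[symmetric] algebra_simps)
  ultimately have "\<forall>\<mu>\<in>M. a \<mu> * (\<mu> - m) = 0"
    using insert.IH[of "\<lambda>\<mu>. a \<mu> * (\<mu> - m)"] insert.prems by auto
  then have rest: "\<forall>\<mu>\<in>M. a \<mu> = 0" using insert.hyps by auto
  then have "a m = 0" using combination insert.prems by simp
  then show ?case using rest by simp
qed

lemma finite_real_eigenvalues: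
  fixes A :: "real^'n^'n"
  shows "finite {\<mu>. real_eigenvalue A \<mu>}"
proof (rule ccontr)
  let ?S = "{\<mu>. real_eigenvalue A \<mu>}"
  define f where "f \<mu> = (SOME x. x \<noteq> 0 \<and> A *v x = \<mu> *\<^sub>R x)" for \<mu>
  have f: "f \<mu> \<noteq> 0 \<and> A *v f \<mu> = \<mu> *\<^sub>R f \<mu>" if "\<mu> \<in> ?S" for \<mu>
    using that someI_ex[of "\<lambda>x. x \<noteq> 0 \<and> A *v x = \<mu> *\<^sub>R x"]
    unfolding f_def real_eigenvalue_def by auto
  assume "infinite ?S"
  then obtain M where M: "finite M" "card M = Suc CARD('n)" "M \<subseteq> ?S"
    using infinite_arbitrarily_large by blast
  have inj: "inj_on f M"
  proof (rule inj_onI)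
    fix \<mu> \<mu>' assume "\<mu> \<in> M" "\<mu>' \<in> M" "f \<mu> = f \<mu>'"
    then show "\<mu> = \<mu>'" using f M(3) by (metis scaleR_cancel_right subsetD)
  qed
  have "independent (f ` M)"
    unfolding independent_explicit
  proof (intro conjI allI impI ballI)
    show "finite (f ` M)" using M by simp
    fix c v assume c: "(\<Sum>v\<in>f ` M. c v *\<^sub>R v) = 0" and v: "v \<in> f ` M"
    have "(\<Sum>\<mu>\<in>M. (c \<circ> f) \<mu> *\<^sub>R f \<mu>) = 0"
      using c by (simp add: sum.reindex[OF inj])
    then have "\<forall>\<mu>\<in>M. (c \<circ> f) \<mu> = 0"
      using eigenvectors_independent[of M A f "c \<circ> f"] M f by auto
    then show "c v = 0" using v by auto
  qed
  then have "card (f ` M) \<le> CARD('n)" using independent_bound by fastforce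
  then show False using card_image[OF inj] M(2) by simp
qed

lemma largest_eigenvalue_eigenvector:
  fixes A :: "real^'n^'n"
  assumes "\<exists>\<mu>. real_eigenvalue A \<mu>"
  obtains x where "x \<noteq> 0" "A *v x = largest_eigenvalue A *\<^sub>R x"
proof -
  have "real_eigenvalue A (largest_eigenvalue A)"
    unfolding largest_eigenvalue_def
    using Max_in[OF finite_real_eigenvalues] assms by auto
  then show ?thesis using that unfolding real_eigenvalue_def by blast
qed

definition prob_simplex :: "(real^'n) set" where
  "prob_simplex = {y. (\<forall>i. 0 \<le> y$i) \<and> (\<Sum>i\<in>UNIV. y$i) = 1}"

lemma prob_simplex_compact_convex:
  shows "compact (prob_simplex :: (real^'n) set)" and "convex (prob_simplex :: (real^'n) set)"
    and "(prob_simplex :: (real^'n) set) \<noteq> {}"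
proof -
  have "prob_simplex \<subseteq> cbox 0 (1 :: real^'n)"
  proof
    fix y :: "real^'n" assume y: "y \<in> prob_simplex"
    have "y$i \<le> (\<Sum>i\<in>UNIV. y$i)" for i
      by (rule member_le_sum) (use y in \<open>auto simp: prob_simplex_def\<close>)
    then show "y \<in> cbox 0 1" using y by (auto simp: mem_box_cart prob_simplex_def)
  qed
  then have "bounded (prob_simplex :: (real^'n) set)" using bounded_cbox bounded_subset by blast
  moreover have "closed (prob_simplex :: (real^'n) set)"
  proof -
    have "prob_simplex = (\<Inter>i. {y::real^'n. 0 \<le> y$i}) \<inter> {y. (\<Sum>i\<in>UNIV. y$i) = 1}"
      unfolding prob_simplex_def by auto
    moreover have "closed (\<Inter>i. {y::real^'n. 0 \<le> y$i})"
      by (intro closed_INT ballI closed_Collect_le continuous_intros)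
    moreover have "closed {y::real^'n. (\<Sum>i\<in>UNIV. y$i) = 1}"
      by (intro closed_Collect_eq continuous_intros)
    ultimately show ?thesis by (metis closed_Int)
  qed
  ultimately show "compact (prob_simplex :: (real^'n) set)"
    by (simp add: compact_eq_bounded_closed)
  show "convex (prob_simplex :: (real^'n) set)"
    unfolding convex_def prob_simplex_def
    by (auto simp: sum.distrib sum_distrib_left[symmetric])
  have "((\<chi> i. 1 / real CARD('n)) :: real^'n) \<in> prob_simplex" unfolding prob_simplex_def by simp
  then show "(prob_simplex :: (real^'n) set) \<noteq> {}" by blast
qed

lemma nonneg_matrix_on_simplex:
  fixes A :: "real^'n^'n"
  assumes nonneg: "\<forall>i j. 0 \<le> A$i$j" and column: "\<forall>j. \<exists>i. 0 < A$i$j"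
    and y: "y \<in> prob_simplex"
  shows "0 \<le> (A *v y)$i" and "0 < (\<Sum>i\<in>UNIV. (A *v y)$i)"
proof -
  show entry_nonneg: "0 \<le> (A *v y)$i" for i
    using nonneg y unfolding prob_simplex_def matrix_vector_mult_def by (auto intro!: sum_nonneg)
  obtain j where j: "0 < y$j"
  proof (rule ccontr)
    assume "\<not> thesis"
    then have "\<not> 0 < y$j" for j using that by blast
    then have "y$j = 0" for j using y unfolding prob_simplex_def by (auto simp: not_less intro: order.antisym)
    then show False using y unfolding prob_simplex_def by simp
  qed
  obtain i where i: "0 < A$i$j" using column by blast
  have "A$i$j * y$j \<le> (\<Sum>k\<in>UNIV. A$i$k * y$k)"
    by (rule member_le_sum) (use nonneg y in \<open>auto simp: prob_simplex_def\<close>)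
  then have "0 < (A *v y)$i"
    using mult_pos_pos[OF i j] unfolding matrix_vector_mult_def by simp
  also have "(A *v y)$i \<le> (\<Sum>i\<in>UNIV. (A *v y)$i)"
    by (rule member_le_sum) (use entry_nonneg in auto)
  finally show "0 < (\<Sum>i\<in>UNIV. (A *v y)$i)" .
qed

text \<open>Existence part of Perron--Frobenius: a nonnegative matrix without zero columns has a
  real eigenvalue, namely at a Brouwer fixed point of the normalised map on the simplex.\<close>
lemma nonneg_matrix_has_real_eigenvalue:
  fixes A :: "real^'n^'n"
  assumes nonneg: "\<forall>i j. 0 \<le> A$i$j" and column: "\<forall>j. \<exists>i. 0 < A$i$j"
  shows "\<exists>\<mu>. real_eigenvalue A \<mu>"
proof -
  define s where "s y = (\<Sum>i\<in>UNIV. (A *v y)$i)" for y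
  define g where "g y = (1 / s y) *\<^sub>R (A *v y)" for y
  note on_simplex = nonneg_matrix_on_simplex[OF nonneg column]
  have "continuous_on prob_simplex (\<lambda>y. A *v y)"
    by (rule linear_continuous_on[OF linear_linear[THEN iffD2, OF matrix_vector_mul_linear]])
  then have "continuous_on prob_simplex g"
    unfolding g_def s_def using on_simplex(2)
    by (intro continuous_intros) (auto dest: on_simplex(2))
  moreover have "g \<in> prob_simplex \<rightarrow> prob_simplex"
  proof
    fix y :: "real^'n" assume y: "y \<in> prob_simplex"
    have "0 \<le> g y $ i" for i using on_simplex[OF y] by (simp add: g_def s_def)
    moreover have "(\<Sum>i\<in>UNIV. g y $ i) = 1"
      using on_simplex(2)[OF y] by (simp add: g_def s_def sum_divide_distrib[symmetric])
    ultimately show "g y \<in> prob_simplex" by (simp add: prob_simplex_def)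
  qed
  ultimately obtain y where y: "y \<in> prob_simplex" "g y = y"
    using brouwer[OF prob_simplex_compact_convex] by blast
  have "A *v y = s y *\<^sub>R g y" using on_simplex(2)[OF y(1)] by (simp add: g_def s_def)
  then have "A *v y = s y *\<^sub>R y" using y(2) by simp
  moreover have "y \<noteq> 0" using y by (auto simp: prob_simplex_def)
  ultimately show ?thesis unfolding real_eigenvalue_def by blast
qed

definition is_min_cover :: "('v::{finite,linorder} \<Rightarrow> 'v \<Rightarrow> bool) \<Rightarrow> ('v \<Rightarrow> real) \<Rightarrow> 'v set \<Rightarrow> bool" where
  "is_min_cover E c S \<longleftrightarrow> vertex_cover E S \<and> (\<forall>T. vertex_cover E T \<longrightarrow> sum c S \<le> sum c T) \<and>
      (\<forall>T. vertex_cover E T \<longrightarrow> sum c T = sum c S \<longrightarrow> T \<noteq> S \<longrightarrow>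
           lexordp (<) (sorted_list_of_set S) (sorted_list_of_set T))"

lemma min_cover_def': "min_cover E c = (THE S. is_min_cover E c S)"
  unfolding min_cover_def is_min_cover_def by (rule refl)

text \<open>The tie-breaking order is the lexicographic order on lists of \<open>List_Lexorder\<close>,
  a linear order, so finite sets of lists have least elements.\<close>
lemma lexordp_less_iff_list_less: "List.lexordp (<) xs ys \<longleftrightarrow> (xs::'a::linorder list) < ys"
  by (simp add: List.lexordp_def lexordp_conv_lexord list_less_def)

text \<open>The cheapest cover is well defined: among covers of minimal cost take the one whose
  sorted element list is lexicographically least; two such sets would precede each other.\<close>
lemma is_min_cover_exists_unique:
  fixes E :: "'v::{finite,linorder} \<Rightarrow> 'v \<Rightarrow> bool"
  shows "\<exists>!S. is_min_cover E c S"
proof -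
  define m where "m = Min (sum c ` {S. vertex_cover E S})"
  define C where "C = {S. vertex_cover E S \<and> sum c S = m}"
  have "vertex_cover E UNIV" by (simp add: vertex_cover_def)
  then have m_min: "m \<in> sum c ` {S. vertex_cover E S}" "\<And>T. vertex_cover E T \<Longrightarrow> m \<le> sum c T"
    unfolding m_def by (auto intro!: Min_in Min_le)
  define l where "l = Min (sorted_list_of_set ` C)"
  have "l \<in> sorted_list_of_set ` C" unfolding l_def C_def using m_min(1) by (intro Min_in) auto
  then obtain S where S: "S \<in> C" "sorted_list_of_set S = l" by blast
  have "is_min_cover E c S"
    unfolding is_min_cover_def lexordp_less_iff_list_less
  proof (intro conjI allI impI)
    show "vertex_cover E S" using S C_def by auto
    fix T assume T: "vertex_cover E T"
    show "sum c S \<le> sum c T" using S C_def m_min(2)[OF T] by auto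
    assume "sum c T = sum c S" "T \<noteq> S"
    then have "T \<in> C" "sorted_list_of_set T \<noteq> l"
      using S C_def T sorted_list_of_set_inject[of T S] by auto
    moreover have "l \<le> sorted_list_of_set T" if "T \<in> C" unfolding l_def using that by simp
    ultimately show "sorted_list_of_set S < sorted_list_of_set T" using S(2) by simp
  qed
  moreover have "S' = S" if "is_min_cover E c S'" "is_min_cover E c S" for S' S
  proof (rule ccontr)
    assume "S' \<noteq> S"
    moreover have "sum c S' = sum c S" using that unfolding is_min_cover_def by (meson order.antisym)
    ultimately have "sorted_list_of_set S' < sorted_list_of_set S" "sorted_list_of_set S < sorted_list_of_set S'"
      using that unfolding is_min_cover_def lexordp_less_iff_list_less by metis+
    then show False by simp
  qed
  ultimately show ?thesis by blast
qed

lemma min_cover_is_min_cover: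
  fixes E :: "'v::{finite,linorder} \<Rightarrow> 'v \<Rightarrow> bool"
  shows "is_min_cover E c (min_cover E c)"
  unfolding min_cover_def' using theI'[OF is_min_cover_exists_unique] .

lemma min_cover_cover:
  fixes E :: "'v::{finite,linorder} \<Rightarrow> 'v \<Rightarrow> bool"
  shows "vertex_cover E (min_cover E c)"
    and "vertex_cover E T \<Longrightarrow> sum c (min_cover E c) \<le> sum c T"
  using min_cover_is_min_cover[of E c] unfolding is_min_cover_def by auto

lemma min_cover_scale:
  fixes E :: "'v::{finite,linorder} \<Rightarrow> 'v \<Rightarrow> bool"
  assumes "0 < t"
  shows "min_cover E (\<lambda>v. t * c v) = min_cover E c"
proof -
  have "sum (\<lambda>v. t * c v) X = t * sum c X" for X by (simp add: sum_distrib_left)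
  then have "is_min_cover E (\<lambda>v. t * c v) = is_min_cover E c"
    using assms unfolding is_min_cover_def by simp
  then show ?thesis unfolding min_cover_def' by simp
qed

definition nu_feasible :: "('v::{finite,linorder} \<Rightarrow> 'v \<Rightarrow> bool) \<Rightarrow> ('v \<Rightarrow> real) \<Rightarrow> 'v set \<Rightarrow> ('v \<Rightarrow> real) set" where
  "nu_feasible E c S = {x. (\<forall>e. c e \<le> x e) \<and> (\<forall>e. e \<notin> S \<longrightarrow> x e = c e) \<and>
                          (\<forall>T. vertex_cover E T \<longrightarrow> sum x S \<le> sum x T)}"

lemma nu_eq_Sup: "nu E c = Sup ((\<lambda>x. sum x (min_cover E c)) ` nu_feasible E c (min_cover E c))"
  unfolding nu_def nu_feasible_def Let_def by (rule arg_cong[where f = Sup]) blast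

lemma nu_feasible_scale:
  fixes E :: "'v::{finite,linorder} \<Rightarrow> 'v \<Rightarrow> bool"
  assumes t: "0 < t"
  shows "nu_feasible E (\<lambda>v. t * c v) S = (\<lambda>x v. t * x v) ` nu_feasible E c S"
proof -
  have feasible_iff: "(\<lambda>v. t * x v) \<in> nu_feasible E (\<lambda>v. t * c v) S \<longleftrightarrow> x \<in> nu_feasible E c S" for x
    using t by (simp add: nu_feasible_def sum_distrib_left[symmetric])
  have "x \<in> (\<lambda>x v. t * x v) ` nu_feasible E c S" if "x \<in> nu_feasible E (\<lambda>v. t * c v) S" for x
    using that t feasible_iff[of "\<lambda>v. x v / t"] by (intro image_eqI[of _ _ "\<lambda>v. x v / t"]) auto
  then show ?thesis using feasible_iff by blast
qed

lemma cSup_scale: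
  fixes A :: "real set"
  assumes "0 < t" "A \<noteq> {}" "bdd_above A"
  shows "Sup ((\<lambda>a. t * a) ` A) = t * Sup A"
proof (rule cSup_eq_non_empty)
  show "(\<lambda>a. t * a) ` A \<noteq> {}" using assms by simp
  show "x \<le> t * Sup A" if "x \<in> (\<lambda>a. t * a) ` A" for x
    using that cSup_upper[OF _ assms(3)] assms(1) by auto
  fix y assume "\<And>x. x \<in> (\<lambda>a. t * a) ` A \<Longrightarrow> x \<le> y"
  then have "Sup A \<le> y / t"
    using assms by (intro cSup_least) (auto simp: pos_le_divide_eq mult.commute)
  then show "t * Sup A \<le> y" using assms by (simp add: pos_le_divide_eq mult.commute)
qed

lemma nu_scale:
  fixes E :: "'v::{finite,linorder} \<Rightarrow> 'v \<Rightarrow> bool" and c :: "'v \<Rightarrow> real"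
  defines "vals \<equiv> (\<lambda>x. sum x (min_cover E c)) ` nu_feasible E c (min_cover E c)"
  assumes "0 < t" "vals \<noteq> {}" "bdd_above vals"
  shows "nu E (\<lambda>v. t * c v) = t * nu E c"
proof -
  have "(\<lambda>x. sum x (min_cover E c)) ` nu_feasible E (\<lambda>v. t * c v) (min_cover E c) = (\<lambda>a. t * a) ` vals"
    unfolding vals_def nu_feasible_scale[OF assms(2)] image_image by (simp add: sum_distrib_left)
  then show ?thesis
    using assms cSup_scale unfolding nu_eq_Sup min_cover_scale[OF assms(2)] by simp
qed

definition unit_cost :: "'v \<Rightarrow> 'v \<Rightarrow> real" where
  "unit_cost w = (\<lambda>u. if u = w then 1 else 0)"

lemma nu_vertex_unit_cost: "nu_vertex E w = nu E (unit_cost w)"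
  unfolding nu_vertex_def unit_cost_def by (rule refl)

lemma vertex_cover_delete:
  assumes "irreflp E"
  shows "vertex_cover E (UNIV - {e})"
  using assms unfolding vertex_cover_def by (auto dest: irreflpD)

text \<open>In a loopless graph every feasible price of a vertex in \<open>S\<close> is at most the total cost
  outside \<open>S\<close> (removing that vertex still leaves a cover), so \<open>\<nu>\<close> is a proper supremum.\<close>
lemma nu_feasible_bounded:
  fixes E :: "'v::{finite,linorder} \<Rightarrow> 'v \<Rightarrow> bool"
  assumes noloop: "irreflp E" and x: "x \<in> nu_feasible E c S"
  shows "sum x S \<le> real (card S) * sum c (UNIV - S)"
proof -
  have "sum x (UNIV - S) = sum c (UNIV - S)"
    using x unfolding nu_feasible_def by (intro sum.cong) auto
  then have total: "sum x UNIV = sum x S + sum c (UNIV - S)"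
    using sum.subset_diff[of S UNIV x] by simp
  have "x e \<le> sum c (UNIV - S)" if "e \<in> S" for e
  proof -
    have "sum x S \<le> sum x (UNIV - {e})"
      using x vertex_cover_delete[OF noloop] unfolding nu_feasible_def by blast
    also have "\<dots> = sum x UNIV - x e" by (simp add: sum_diff1)
    finally show ?thesis using total by simp
  qed
  then show ?thesis by (intro sum_bounded_above) auto
qed

text \<open>For the unit cost at a non-isolated vertex \<open>w\<close>, the cheapest cover avoids \<open>w\<close>
  (it costs \<open>0\<close>) and hence contains each neighbour of \<open>w\<close>.\<close>
lemma min_cover_unit_cost:
  fixes E :: "'v::{finite,linorder} \<Rightarrow> 'v \<Rightarrow> bool"
  assumes noloop: "irreflp E" and wz: "E w z"
  shows "w \<notin> min_cover E (unit_cost w)" and "z \<in> min_cover E (unit_cost w)"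
proof -
  show w_out: "w \<notin> min_cover E (unit_cost w)"
  proof
    assume "w \<in> min_cover E (unit_cost w)"
    then have "sum (unit_cost w) (min_cover E (unit_cost w)) = 1" by (simp add: unit_cost_def)
    moreover have "sum (unit_cost w) (UNIV - {w}) = 0" by (simp add: unit_cost_def)
    ultimately show False
      using min_cover_cover(2)[OF vertex_cover_delete[OF noloop, of w], of "unit_cost w"] by simp
  qed
  then show "z \<in> min_cover E (unit_cost w)"
    using min_cover_cover(1) wz unfolding vertex_cover_def by blast
qed

text \<open>Pricing the neighbour \<open>z\<close> at \<open>1\<close> is feasible for the unit cost at \<open>w\<close>: every cover
  contains \<open>w\<close> or \<open>z\<close>.\<close>
lemma unit_price_feasible:
  fixes E :: "'v::{finite,linorder} \<Rightarrow> 'v \<Rightarrow> bool" and w :: 'v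
  defines "S \<equiv> min_cover E (unit_cost w)"
  assumes noloop: "irreflp E" and wz: "E w z"
  shows "1 \<in> (\<lambda>x. sum x S) ` nu_feasible E (unit_cost w) S"
proof -
  define x where "x u = (if u = z then 1 else unit_cost w u)" for u
  have zw: "z \<noteq> w" using noloop wz by (auto dest: irreflpD)
  have x_nonneg: "0 \<le> x u" for u by (simp add: x_def unit_cost_def)
  have w_out: "w \<notin> S" and z_in: "z \<in> S"
    using min_cover_unit_cost[OF noloop wz] unfolding S_def by auto
  have "sum x S = (\<Sum>u\<in>S. if u = z then 1 else 0)"
    using w_out by (intro sum.cong) (auto simp: x_def unit_cost_def)
  then have sum_S: "sum x S = 1" using z_in by simp
  have "x \<in> nu_feasible E (unit_cost w) S"
    unfolding nu_feasible_def
  proof (intro CollectI conjI allI impI)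
    fix e show "unit_cost w e \<le> x e" by (simp add: x_def unit_cost_def)
    show "e \<notin> S \<Longrightarrow> x e = unit_cost w e" using z_in by (auto simp: x_def)
  next
    fix T assume "vertex_cover E T"
    then have "w \<in> T \<or> z \<in> T" using wz unfolding vertex_cover_def by blast
    moreover have "x w = 1" "x z = 1" using zw by (auto simp: x_def unit_cost_def)
    ultimately have "1 \<le> sum x T" using member_le_sum[of _ T x] x_nonneg by (metis finite)
    then show "sum x S \<le> sum x T" using sum_S by simp
  qed
  then show ?thesis using sum_S by force
qed

lemma nu_vertex_unit_cost_facts:
  fixes E :: "'v::{finite,linorder} \<Rightarrow> 'v \<Rightarrow> bool"
  assumes noloop: "irreflp E" and wz: "E w z"
  shows "1 \<le> nu_vertex E w"
    and "0 < t \<Longrightarrow> nu E (\<lambda>v. t * unit_cost w v) = t * nu_vertex E w"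
proof -
  define S where "S = min_cover E (unit_cost w)"
  define vals where "vals = (\<lambda>x. sum x S) ` nu_feasible E (unit_cost w) S"
  have one: "1 \<in> vals" using unit_price_feasible[OF noloop wz] unfolding vals_def S_def .
  have bdd: "bdd_above vals"
    using nu_feasible_bounded[OF noloop] unfolding vals_def by (intro bdd_aboveI) blast
  show "1 \<le> nu_vertex E w"
    unfolding nu_vertex_unit_cost nu_eq_Sup using cSup_upper[OF one bdd] unfolding vals_def S_def .
  show "0 < t \<Longrightarrow> nu E (\<lambda>v. t * unit_cost w v) = t * nu_vertex E w"
    using nu_scale[of t] one bdd unfolding nu_vertex_unit_cost vals_def S_def by blast
qed

lemma connected_no_isolated_vertex:
  assumes noloop: "irreflp E" and connected: "connected_graph E" and edge: "E a b"
  shows "\<exists>z. E w z"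
proof (rule ccontr)
  assume isolated: "\<nexists>z. E w z"
  have "w = v" if "E\<^sup>*\<^sup>* w v" for v
    using that by (rule converse_rtranclpE) (use isolated in auto)
  then have "w = a" "w = b" using connected unfolding connected_graph_def by auto
  then show False using edge noloop by (auto dest: irreflpD)
qed

text \<open>\<open>K\<close> is nonnegative and, if no vertex is isolated, has no zero column; so it has a
  real eigenvalue and the largest eigenvalue \<open>\<lambda>\<close> is well defined.\<close>
lemma Kmat_has_real_eigenvalue:
  fixes E :: "'v::{finite,linorder} \<Rightarrow> 'v \<Rightarrow> bool"
  assumes graph: "simple_graph E" and nbr: "\<And>v. \<exists>z. E v z"
  shows "\<exists>\<mu>. real_eigenvalue (Kmat E) \<mu>"
proof (rule nonneg_matrix_has_real_eigenvalue)
  have noloop: "irreflp E" using graph by (simp add: simple_graph_def irreflp_def)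
  have nv: "0 < nu_vertex E v" for v
    using nbr nu_vertex_unit_cost_facts(1)[OF noloop] by (meson less_le_trans zero_less_one)
  then show "\<forall>i j. 0 \<le> Kmat E $ i $ j" by (simp add: Kmat_def less_imp_le)
  show "\<forall>j. \<exists>i. 0 < Kmat E $ i $ j"
  proof
    fix j obtain z where "E j z" using nbr by blast
    then have "E z j" using graph unfolding simple_graph_def by blast
    then show "\<exists>i. 0 < Kmat E $ i $ j" using nv[of z] by (auto simp: Kmat_def)
  qed
qed

text \<open>Rayleigh-type bound for \<open>K\<close>: an eigenvector \<open>x\<close> of \<open>K\<close> for \<open>\<mu>\<close> satisfies
  \<open>\<mu> \<Sum>\<^sub>u \<nu>\<^sub>u x\<^sub>u\<^sup>2 = \<Sum>\<^sub>u\<^sub>\<sim>\<^sub>w x\<^sub>u x\<^sub>w \<le> \<Sum>\<^sub>u\<^sub>\<sim>\<^sub>w |x\<^sub>u| |x\<^sub>w|\<close>.\<close>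
lemma Kmat_eigenvector_bound:
  fixes E :: "'v::{finite,linorder} \<Rightarrow> 'v \<Rightarrow> bool"
  assumes nv: "\<And>u. 0 < nu_vertex E u" and x: "Kmat E *v x = \<mu> *\<^sub>R x"
  shows "\<mu> * (\<Sum>u\<in>UNIV. nu_vertex E u * \<bar>x$u\<bar>^2)
           \<le> (\<Sum>u\<in>UNIV. \<Sum>w\<in>UNIV. if E u w then \<bar>x$u\<bar> * \<bar>x$w\<bar> else 0)"
proof -
  have row: "(\<Sum>w\<in>UNIV. if E u w then x$u * x$w else 0) = \<mu> * (nu_vertex E u * (x$u)^2)" for u
  proof -
    have "(\<Sum>w\<in>UNIV. (if E u w then 1 / nu_vertex E u else 0) * x$w) = \<mu> * x$u"
      using arg_cong[OF x, of "\<lambda>v. v $ u"] unfolding matrix_vector_mult_def Kmat_def by simp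
    moreover have "nu_vertex E u * x$u * (\<Sum>w\<in>UNIV. (if E u w then 1 / nu_vertex E u else 0) * x$w)
        = (\<Sum>w\<in>UNIV. if E u w then x$u * x$w else 0)"
      unfolding sum_distrib_left using nv[of u] by (intro sum.cong) auto
    ultimately show ?thesis by (simp add: power2_eq_square algebra_simps)
  qed
  have "\<mu> * (\<Sum>u\<in>UNIV. nu_vertex E u * \<bar>x$u\<bar>^2) = (\<Sum>u\<in>UNIV. \<Sum>w\<in>UNIV. if E u w then x$u * x$w else 0)"
    by (simp add: sum_distrib_left row)
  also have "\<dots> \<le> (\<Sum>u\<in>UNIV. \<Sum>w\<in>UNIV. if E u w then \<bar>x$u\<bar> * \<bar>x$w\<bar> else 0)"
    by (intro sum_mono) (auto simp: abs_mult[symmetric])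
  finally show ?thesis .
qed

lemma mechanism_payment_nonneg:
  assumes mech: "is_mechanism E W p" and b: "nonneg b" and win: "e \<in> W b"
  shows "0 \<le> p b e"
  using mech b win unfolding is_mechanism_def nonneg_def by (meson order.trans)

text \<open>Threshold property of truthful mechanisms: if agent \<open>e\<close> wins by bidding \<open>x\<close>, then with
  cost and bid \<open>0\<close> (others unchanged) it still wins and is paid at least \<open>x\<close>; otherwise
  bidding \<open>x\<close> would be a profitable lie.\<close>
lemma truthful_winner_paid_at_zero_bid:
  assumes mech: "is_mechanism E W p" and tru: "truthful W p"
    and b: "nonneg b" "b e = 0" and x: "0 \<le> x" and win: "e \<in> W (b(e := x))"
  shows "e \<in> W b" and "x \<le> p b e"
proof -
  have "nonneg (b(e := x))" using b(1) x by (simp add: nonneg_def)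
  then have "x \<le> p (b(e := x)) e" using mech win unfolding is_mechanism_def by fastforce
  then have "x \<le> profit W p (b(e := x)) e 0" using win by (simp add: profit_def)
  also have "\<dots> \<le> profit W p (b(e := 0)) e 0" using tru b(1) x unfolding truthful_def by blast
  also have "b(e := 0) = b" using b(2) by auto
  finally have gain: "x \<le> profit W p b e 0" .
  show won: "e \<in> W b"
  proof (rule ccontr)
    assume lost: "e \<notin> W b"
    then have "x = 0" using gain x by (simp add: profit_def)
    then show False using win lost b(2) by (simp add: fun_upd_idem)
  qed
  then show "x \<le> p b e" using gain by (simp add: profit_def)
qed

definition pair_bid :: "('v \<Rightarrow> real) \<Rightarrow> 'v \<Rightarrow> 'v \<Rightarrow> 'v \<Rightarrow> real" where
  "pair_bid y u w = (\<lambda>v. if v = u \<or> v = w then y v else 0)"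

lemma winning_neighbours_paid:
  fixes y :: "'v::finite \<Rightarrow> real"
  assumes mech: "is_mechanism E W p" and tru: "truthful W p" and y: "\<And>u. 0 \<le> y u"
  shows "(\<Sum>u\<in>UNIV. if u \<noteq> w \<and> u \<in> W (pair_bid y u w) then y u else 0)
           \<le> total_payment W p (\<lambda>v. y w * unit_cost w v)"
proof -
  define c where "c = (\<lambda>v. y w * unit_cost w v)"
  have c: "nonneg c" using y by (simp add: c_def nonneg_def unit_cost_def)
  have "(if u \<noteq> w \<and> u \<in> W (pair_bid y u w) then y u else 0) \<le> (if u \<in> W c then p c u else 0)" for u
  proof (cases "u \<noteq> w \<and> u \<in> W (pair_bid y u w)")
    case True
    have "c(u := y u) = pair_bid y u w" and cu: "c u = 0"
      using True by (auto simp: c_def unit_cost_def pair_bid_def fun_eq_iff)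
    then have "u \<in> W (c(u := y u))" using True by simp
    then have "u \<in> W c" "y u \<le> p c u"
      using truthful_winner_paid_at_zero_bid[OF mech tru c cu y] by auto
    then show ?thesis using True by simp
  next
    case False
    then show ?thesis using mechanism_payment_nonneg[OF mech c] y[of u] by auto
  qed
  then have "(\<Sum>u\<in>UNIV. if u \<noteq> w \<and> u \<in> W (pair_bid y u w) then y u else 0)
      \<le> (\<Sum>u\<in>UNIV. if u \<in> W c then p c u else 0)"
    by (rule sum_mono)
  also have "\<dots> = total_payment W p c" by (simp add: total_payment_def sum.If_cases)
  finally show ?thesis unfolding c_def .
qed

lemma frugality_ratio_bound:
  assumes ratio: "frugality_ratio E W p \<le> ereal r" and c: "nonneg c" "0 < nu E c"
  shows "total_payment W p c \<le> r * nu E c"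
proof -
  have "ereal (total_payment W p c / nu E c) \<le> frugality_ratio E W p"
    unfolding frugality_ratio_def by (rule SUP_upper) (use c in simp)
  then have "ereal (total_payment W p c / nu E c) \<le> ereal r" using ratio by (rule order.trans)
  then have "total_payment W p c / nu E c \<le> r" by simp
  then show ?thesis using c(2) by (simp add: divide_le_eq)
qed

lemma edge_sum_le_twice_oriented:
  fixes E R :: "'v::finite \<Rightarrow> 'v \<Rightarrow> bool" and y :: "'v \<Rightarrow> real"
  assumes y: "\<And>u. 0 \<le> y u" and oriented: "\<And>u w. E u w \<Longrightarrow> R u w \<or> R w u"
  shows "(\<Sum>u\<in>UNIV. \<Sum>w\<in>UNIV. if E u w then y u * y w else 0)
           \<le> 2 * (\<Sum>w\<in>UNIV. y w * (\<Sum>u\<in>UNIV. if R u w then y u else 0))"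
proof -
  define L where "L = (\<Sum>u\<in>UNIV. \<Sum>w\<in>UNIV. if R u w then y u * y w else 0)"
  have "(\<Sum>u\<in>UNIV. \<Sum>w\<in>UNIV. if E u w then y u * y w else 0)
      \<le> (\<Sum>u\<in>UNIV. \<Sum>w\<in>UNIV. (if R u w then y u * y w else 0) + (if R w u then y u * y w else 0))"
    using oriented y by (intro sum_mono) (auto intro: mult_nonneg_nonneg)
  also have "\<dots> = L + (\<Sum>u\<in>UNIV. \<Sum>w\<in>UNIV. if R w u then y u * y w else 0)"
    unfolding L_def by (simp add: sum.distrib)
  also have "(\<Sum>u\<in>UNIV. \<Sum>w\<in>UNIV. if R w u then y u * y w else 0) = L"
    unfolding L_def by (subst sum.swap) (auto intro!: sum.cong simp: mult.commute)
  also have "L + L = 2 * L" by simp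
  also have "L = (\<Sum>w\<in>UNIV. y w * (\<Sum>u\<in>UNIV. if R u w then y u else 0))"
    unfolding L_def sum_distrib_left by (subst sum.swap) (auto intro!: sum.cong simp: mult.commute)
  finally show ?thesis .
qed

lemma pair_bid_winner:
  assumes mech: "is_mechanism E W p" and noloop: "irreflp E" and y: "\<And>u. 0 \<le> y u"
    and edge: "E u w"
  shows "(u \<noteq> w \<and> u \<in> W (pair_bid y u w)) \<or> (w \<noteq> u \<and> w \<in> W (pair_bid y w u))"
proof -
  have "nonneg (pair_bid y u w)" using y by (simp add: nonneg_def pair_bid_def)
  then have "u \<in> W (pair_bid y u w) \<or> w \<in> W (pair_bid y u w)"
    using mech edge unfolding is_mechanism_def vertex_cover_def by blast
  moreover have "pair_bid y w u = pair_bid y u w" by (auto simp: pair_bid_def)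
  ultimately show ?thesis using edge noloop by (auto dest: irreflpD)
qed

text \<open>If every total payment is at most \<open>r \<cdot> \<nu>\<close>, the neighbours of \<open>w\<close> that win their pair bid
  against \<open>w\<close> carry total weight at most \<open>r y\<^sub>w \<nu>\<^sub>w\<close>, since \<open>\<nu>(y\<^sub>w \<one>\<^sub>w) = y\<^sub>w \<nu>\<^sub>w\<close>.\<close>
lemma pair_winners_weight_bound:
  fixes E :: "'v::{finite,linorder} \<Rightarrow> 'v \<Rightarrow> bool"
  assumes noloop: "irreflp E" and wz: "E w z"
    and mech: "is_mechanism E W p" and tru: "truthful W p" and y: "\<And>u. 0 \<le> y u"
    and budget: "\<And>c. nonneg c \<Longrightarrow> 0 < nu E c \<Longrightarrow> total_payment W p c \<le> r * nu E c"
  shows "y w * (\<Sum>u\<in>UNIV. if u \<noteq> w \<and> u \<in> W (pair_bid y u w) then y u else 0)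
           \<le> r * (nu_vertex E w * (y w)^2)"
proof (cases "y w = 0")
  case False
  then have yw: "0 < y w" using y[of w] by simp
  have nu_c: "nu E (\<lambda>v. y w * unit_cost w v) = y w * nu_vertex E w"
    using nu_vertex_unit_cost_facts(2)[OF noloop wz yw] .
  have "(\<Sum>u\<in>UNIV. if u \<noteq> w \<and> u \<in> W (pair_bid y u w) then y u else 0)
      \<le> total_payment W p (\<lambda>v. y w * unit_cost w v)"
    using winning_neighbours_paid[OF mech tru y] .
  also have "\<dots> \<le> r * (y w * nu_vertex E w)"
    using budget[of "\<lambda>v. y w * unit_cost w v"] nu_c yw nu_vertex_unit_cost_facts(1)[OF noloop wz]
    by (simp add: nonneg_def unit_cost_def)
  finally show ?thesis using yw by (simp add: power2_eq_square mult_left_mono algebra_simps)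
qed simp

text \<open>Double counting edges by their pair-bid winners and the
  eigenvector bound give \<open>\<mu> N \<le> 2 r N\<close> with \<open>N = \<Sum>\<^sub>u \<nu>\<^sub>u y\<^sub>u\<^sup>2 > 0\<close>.\<close>
lemma eigenvalue_le_twice_payment_bound:
  fixes E :: "'v::{finite,linorder} \<Rightarrow> 'v \<Rightarrow> bool"
  assumes noloop: "irreflp E" and nbr: "\<And>v. \<exists>z. E v z"
    and mech: "is_mechanism E W p" and tru: "truthful W p"
    and budget: "\<And>c. nonneg c \<Longrightarrow> 0 < nu E c \<Longrightarrow> total_payment W p c \<le> r * nu E c"
    and x: "x \<noteq> 0" "Kmat E *v x = \<mu> *\<^sub>R x"
  shows "\<mu> \<le> 2 * r"
proof -
  define y where "y u = \<bar>x$u\<bar>" for u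
  define R where "R u w \<longleftrightarrow> u \<noteq> w \<and> u \<in> W (pair_bid y u w)" for u w
  define N where "N = (\<Sum>u\<in>UNIV. nu_vertex E u * (y u)^2)"
  have y: "0 \<le> y u" for u by (simp add: y_def)
  have nv: "1 \<le> nu_vertex E u" for u
    using nbr nu_vertex_unit_cost_facts(1)[OF noloop] by blast
  have N_pos: "0 < N"
  proof -
    obtain u where "x$u \<noteq> 0" using x(1) by (metis vec_eq_iff zero_index)
    then have "0 < nu_vertex E u * (y u)^2" using nv[of u] by (simp add: y_def)
    also have "\<dots> \<le> N" unfolding N_def
      by (rule member_le_sum) (use nv order.trans[OF zero_le_one, of "nu_vertex E _"] in auto)
    finally show ?thesis .
  qed
  have weight: "y w * (\<Sum>u\<in>UNIV. if R u w then y u else 0) \<le> r * (nu_vertex E w * (y w)^2)" for w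
  proof -
    obtain z where "E w z" using nbr by blast
    then show ?thesis unfolding R_def by (rule pair_winners_weight_bound[OF noloop _ mech tru y budget])
  qed
  have "\<mu> * N \<le> (\<Sum>u\<in>UNIV. \<Sum>w\<in>UNIV. if E u w then y u * y w else 0)"
    using Kmat_eigenvector_bound[OF _ x(2)] nv unfolding N_def y_def
    by (meson less_le_trans zero_less_one)
  also have "\<dots> \<le> 2 * (\<Sum>w\<in>UNIV. y w * (\<Sum>u\<in>UNIV. if R u w then y u else 0))"
    by (rule edge_sum_le_twice_oriented[OF y]) (use pair_bid_winner[OF mech noloop y] in \<open>simp add: R_def\<close>)
  also have "\<dots> \<le> 2 * (\<Sum>w\<in>UNIV. r * (nu_vertex E w * (y w)^2))"
    using sum_mono[OF weight] by simp
  also have "\<dots> = 2 * (r * N)" by (simp add: N_def sum_distrib_left)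
  finally show ?thesis using N_pos by (simp add: mult.commute)
qed

text \<open>It suffices that \<open>\<lambda> \<le> 2r\<close> for every real upper
  bound \<open>r\<close> of the frugality ratio, which is the core estimate applied to an eigenvector for
  the largest eigenvalue of \<open>K\<close>.\<close>
theorem mainTheorem3:
  fixes E :: "'v::{finite,linorder} \<Rightarrow> 'v \<Rightarrow> bool"
    and W :: "('v \<Rightarrow> real) \<Rightarrow> 'v set"
    and p :: "('v \<Rightarrow> real) \<Rightarrow> 'v \<Rightarrow> real"
  assumes "simple_graph E" and "connected_graph E" and "\<exists>u v. E u v"
    and "is_mechanism E W p" and "truthful W p"
  shows "ereal (largest_eigenvalue (Kmat E) / 2) \<le> frugality_ratio E W p"
proof (rule ereal_le_real)
  fix r assume ratio: "frugality_ratio E W p \<le> ereal r"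
  have noloop: "irreflp E" using assms(1) by (simp add: simple_graph_def irreflp_def)
  have nbr: "\<And>v. \<exists>z. E v z" using connected_no_isolated_vertex[OF noloop assms(2)] assms(3) by blast
  obtain x where "x \<noteq> 0" "Kmat E *v x = largest_eigenvalue (Kmat E) *\<^sub>R x"
    using largest_eigenvalue_eigenvector[OF Kmat_has_real_eigenvalue[OF assms(1) nbr]] by blast
  then have "largest_eigenvalue (Kmat E) \<le> 2 * r"
    using eigenvalue_le_twice_payment_bound[OF noloop nbr assms(4,5) frugality_ratio_bound[OF ratio]]
    by blast
  then show "ereal (largest_eigenvalue (Kmat E) / 2) \<le> ereal r" by simp
qed

end
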